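(* Let $H$ be a real vector space of dimension $d+1$ with $d\ge1$, and $q$ a quadratic form on $H$ of signature $(1,d)$. Let $A\subset H$ be a discrete subset such that for some constant $M>0$ we have $q(x)\ge -M$ for all $x\in A$, and suppose there is a proper subspace $H_0\subsetneq H$ with $A\subset H_0$. Let $u\in H\setminus H_0$ with $q(u)=0$. Then there is an open neighbourhood $U$ of $u$ in $H$ such that $U\cap x^\perp\ne\emptyset$ for only finitely many $x\in A$.
   Context: $x^\perp$ denotes the $q$-orthogonal complement of $x$ in $H$. *)

theory Defs
  imports "HOL-Analysis.Analysis"
begin

definition quadratic_form :: "('a::real_vector \<Rightarrow> real) \<Rightarrow> bool" where
  "quadratic_form q \<longleftrightarrow>
     (\<exists>B. bilinear B \<and> (\<forall>x y. B x y = B y x) \<and> (\<forall>x. q x = B x x))"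

definition polar_form :: "('a::real_vector \<Rightarrow> real) \<Rightarrow> 'a \<Rightarrow> 'a \<Rightarrow> real" where
  "polar_form q x y = (q (x + y) - q x - q y) / 2"

definition q_orth :: "('a::real_vector \<Rightarrow> real) \<Rightarrow> 'a \<Rightarrow> 'a set" where
  "q_orth q x = {y. polar_form q x y = 0}"

definition has_signature :: "('a::euclidean_space \<Rightarrow> real) \<Rightarrow> nat \<Rightarrow> nat \<Rightarrow> bool" where
  "has_signature q p n \<longleftrightarrow> quadratic_form q \<and>
     (\<exists>V. subspace V \<and> dim V = p \<and> (\<forall>v\<in>V. v \<noteq> 0 \<longrightarrow> q v > 0)) \<and>
     (\<forall>V. subspace V \<and> (\<forall>v\<in>V. v \<noteq> 0 \<longrightarrow> q v > 0) \<longrightarrow> dim V \<le> p) \<and>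
     (\<exists>V. subspace V \<and> dim V = n \<and> (\<forall>v\<in>V. v \<noteq> 0 \<longrightarrow> q v < 0)) \<and>
     (\<forall>V. subspace V \<and> (\<forall>v\<in>V. v \<noteq> 0 \<longrightarrow> q v < 0) \<longrightarrow> dim V \<le> n)"

text \<open>Discrete subset of H: no accumulation points in H (closed and discrete).\<close>
definition discrete_subset :: "'a::topological_space set \<Rightarrow> bool" where
  "discrete_subset A \<longleftrightarrow> (\<forall>x. \<not> x islimpt A)"

end

theory Submission
  imports Defs
begin

text \<open>Write q x = B x x. A vector w \<in> H0 with q w \<ge> 0 cannot be B-orthogonal to the isotropic
  vector u \<notin> H0: otherwise q would be nonnegative on the plane spanned by w and u, which has to
  meet the d-dimensional negative definite subspace. By compactness of the unit sphere of H0 and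
  homogeneity there is c > 0 with c |x| \<le> |B x u| for every x \<in> H0 with q x \<ge> -c |x|^2.
  As q \<ge> -M on A, this holds for all x \<in> A of large norm, and then x^\<perp> misses a fixed ball
  around u. The remaining points of A lie in a bounded set, so there are finitely many of them
  because A is discrete.\<close>

lemma polar_form_eq_bilinear:
  assumes "bilinear B" and "\<And>x y. B x y = B y x" and "\<And>x. q x = B x x"
  shows "polar_form q x y = B x y"
  unfolding polar_form_def assms(3) using assms(1,2) by (simp add: bilinear_ladd bilinear_radd)

lemma finite_Int_bounded_if_discrete_subset:
  fixes A S :: "'a::heine_borel set"
  assumes "discrete_subset A" and "bounded S"
  shows "finite (A \<inter> S)"
proof (rule ccontr)
  assume "infinite (A \<inter> S)"
  then obtain z where "z islimpt (A \<inter> S)"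
    using bounded_infinite_imp_islimpt[of "A \<inter> S" "A \<inter> S"] assms(2) by blast
  then show False
    using assms(1) islimpt_subset unfolding discrete_subset_def by blast
qed

lemma compact_continuous_pos_imp_uniformly_pos:
  fixes f :: "'a::topological_space \<Rightarrow> real"
  assumes "compact S" and "continuous_on S f" and "\<And>x. x \<in> S \<Longrightarrow> f x > 0"
  obtains c where "c > 0" and "\<And>x. x \<in> S \<Longrightarrow> c \<le> f x"
proof (cases "S = {}")
  case False
  then obtain x0 where "x0 \<in> S" "\<forall>x\<in>S. f x0 \<le> f x"
    using continuous_attains_inf[OF assms(1) False assms(2)] by blast
  then show ?thesis using that assms(3) by blast
qed (use that[of 1] in auto)

lemma dim_nonneg_subspace_add_dim_neg_subspace_le:
  fixes q :: "'a::euclidean_space \<Rightarrow> real"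
  assumes "subspace V" and "\<forall>v\<in>V. q v \<ge> 0"
    and "subspace N" and "\<forall>v\<in>N. v \<noteq> 0 \<longrightarrow> q v < 0"
  shows "dim V + dim N \<le> DIM('a)"
proof -
  have "V \<inter> N \<subseteq> {0}" using assms(2,4) by force
  then have "dim (V \<inter> N) = 0" by (simp add: dim_eq_0)
  then show ?thesis
    using dim_sums_Int[OF assms(1,3)] dim_subset_UNIV[of "{x + y |x y. x \<in> V \<and> y \<in> N}"]
    by linarith
qed

lemma bilinear_nonneg_on_span_orth_isotropic:
  fixes B :: "'a::real_vector \<Rightarrow> 'a \<Rightarrow> real"
  assumes "bilinear B" and "\<And>x y. B x y = B y x"
    and "B u u = 0" and "B w w \<ge> 0" and "B w u = 0" and "v \<in> span {w, u}"
  shows "B v v \<ge> 0"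
proof -
  obtain k where "v - k *\<^sub>R w \<in> span {u}" using assms(6) span_insert[of w "{u}"] by auto
  then obtain c where "v - k *\<^sub>R w = c *\<^sub>R u" by (auto simp: span_singleton)
  then have v: "v = k *\<^sub>R w + c *\<^sub>R u" by (simp add: algebra_simps)
  have "B v v = k * k * B w w"
    unfolding v using assms(1-3,5)
    by (simp add: bilinear_ladd bilinear_radd bilinear_lmul bilinear_rmul)
  then show ?thesis using assms(4) by simp
qed

lemma orth_isotropic_nonneg_in_span:
  fixes B :: "'a::euclidean_space \<Rightarrow> 'a \<Rightarrow> real"
  assumes "bilinear B" and "\<And>x y. B x y = B y x"
    and "subspace N" and "dim N + 1 = DIM('a)" and "\<forall>v\<in>N. v \<noteq> 0 \<longrightarrow> B v v < 0"
    and "u \<noteq> 0" and "B u u = 0" and "B w w \<ge> 0" and "B w u = 0"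
  shows "w \<in> span {u}"
proof (rule ccontr)
  assume "w \<notin> span {u}"
  then have "independent {w, u}" and "w \<noteq> u"
    using assms(6) span_base[of u "{u}"] by (auto simp: independent_insert)
  then have "dim (span {w, u}) = 2" by (simp add: dim_span dim_eq_card_independent)
  moreover have "dim (span {w, u}) + dim N \<le> DIM('a)"
    using dim_nonneg_subspace_add_dim_neg_subspace_le[of "span {w, u}" "\<lambda>v. B v v" N]
      bilinear_nonneg_on_span_orth_isotropic[OF assms(1,2,7,8,9)] assms(3,5) by auto
  ultimately show False using assms(4) by simp
qed

lemma not_in_span_singleton_outside_subspace:
  assumes "subspace H0" and "u \<notin> H0" and "w \<in> H0" and "w \<noteq> 0"
  shows "w \<notin> span {u}"
proof
  assume "w \<in> span {u}"
  then obtain k where "w = k *\<^sub>R u" by (auto simp: span_singleton)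
  with assms(4) have "u = inverse k *\<^sub>R w" by auto
  then show False using assms(1-3) by (metis subspace_scale)
qed

lemma orth_isotropic_uniform_bound:
  fixes B :: "'a::euclidean_space \<Rightarrow> 'a \<Rightarrow> real"
  assumes "bilinear B" and "\<And>x y. B x y = B y x"
    and "subspace N" and "dim N + 1 = DIM('a)" and "\<forall>v\<in>N. v \<noteq> 0 \<longrightarrow> B v v < 0"
    and "subspace H0" and "u \<notin> H0" and "B u u = 0"
  obtains c where "c > 0"
    and "\<And>x. x \<in> H0 \<Longrightarrow> - c * (norm x)\<^sup>2 \<le> B x x \<Longrightarrow> c * norm x \<le> \<bar>B x u\<bar>"
proof -
  define S where "S = sphere 0 1 \<inter> H0"
  define \<phi> where "\<phi> w = \<bar>B w u\<bar> + max 0 (- B w w)" for w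
  have "\<phi> w > 0" if "w \<in> S" for w
  proof (cases "B w w \<ge> 0")
    case True
    have "w \<noteq> 0" "w \<in> H0" using that unfolding S_def by auto
    then have "w \<notin> span {u}" using not_in_span_singleton_outside_subspace assms(6,7) by blast
    moreover have "u \<noteq> 0" using assms(6,7) subspace_0 by blast
    ultimately have "B w u \<noteq> 0"
      using orth_isotropic_nonneg_in_span[OF assms(1-5) _ assms(8) True] by blast
    then show ?thesis unfolding \<phi>_def by simp
  qed (auto simp: \<phi>_def)
  moreover have "compact S" unfolding S_def
    by (simp add: assms(6) closed_subspace compact_Int_closed)
  moreover have "continuous_on S \<phi>" unfolding \<phi>_def
    by (intro continuous_intros bilinear_continuous_on_compose[OF _ _ assms(1)])
  ultimately obtain c where c: "c > 0" "\<And>w. w \<in> S \<Longrightarrow> c \<le> \<phi> w"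
    using compact_continuous_pos_imp_uniformly_pos by blast
  show ?thesis
  proof (rule that[of "c / 2"])
    fix x assume x: "x \<in> H0" "- (c / 2) * (norm x)\<^sup>2 \<le> B x x"
    show "c / 2 * norm x \<le> \<bar>B x u\<bar>"
    proof (cases "x = 0")
      case False
      define w where "w = inverse (norm x) *\<^sub>R x"
      have x_eq: "x = norm x *\<^sub>R w" using False by (simp add: w_def)
      have "w \<in> S" using False x(1) assms(6) by (simp add: S_def w_def subspace_scale)
      have "B x x = (norm x)\<^sup>2 * B w w"
        using assms(1) by (subst (1 2) x_eq) (simp add: bilinear_lmul bilinear_rmul power2_eq_square)
      with x(2) have "- (c / 2) * (norm x)\<^sup>2 \<le> B w w * (norm x)\<^sup>2" by (simp add: mult.commute)
      then have "- (c / 2) \<le> B w w" by (rule mult_right_le_imp_le) (simp add: False)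
      with c(2)[OF \<open>w \<in> S\<close>] have "c / 2 \<le> \<bar>B w u\<bar>" unfolding \<phi>_def by linarith
      then have "c / 2 * norm x \<le> \<bar>B w u\<bar> * norm x" by (rule mult_right_mono) simp
      moreover have "B x u = norm x * B w u"
        using assms(1) by (subst x_eq) (simp add: bilinear_lmul)
      ultimately show ?thesis by (simp add: abs_mult mult.commute)
    qed (use c(1) in simp)
  qed (use c(1) in simp)
qed

lemma bilinear_nonzero_in_ball:
  assumes "\<And>x y. \<bar>B x y\<bar> \<le> K * norm x * norm y" and "bilinear B" and "K > 0"
    and "x \<noteq> 0" and "c * norm x \<le> \<bar>B x u\<bar>" and "y \<in> ball u (c / K)"
  shows "B x y \<noteq> 0"
proof
  assume "B x y = 0"
  then have "\<bar>B x u\<bar> = \<bar>B x (u - y)\<bar>" using assms(2) by (simp add: bilinear_rsub)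
  also have "\<dots> \<le> K * norm x * norm (u - y)" by (rule assms(1))
  also have "\<dots> < K * norm x * (c / K)"
    using assms(3,4,6) by (intro mult_strict_left_mono) (auto simp: dist_norm)
  finally show False using assms(3,5) by (simp add: mult.commute)
qed

lemma orth_isotropic_near_bounded:
  fixes B :: "'a::euclidean_space \<Rightarrow> 'a \<Rightarrow> real"
  assumes "bilinear B" and "\<And>x y. B x y = B y x"
    and "subspace N" and "dim N + 1 = DIM('a)" and "\<forall>v\<in>N. v \<noteq> 0 \<longrightarrow> B v v < 0"
    and "subspace H0" and "u \<notin> H0" and "B u u = 0" and "M > 0"
  obtains r R where "r > 0"
    and "\<And>x y. x \<in> H0 \<Longrightarrow> - M \<le> B x x \<Longrightarrow> y \<in> ball u r \<Longrightarrow> B x y = 0 \<Longrightarrow> norm x < R"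
proof -
  obtain c where "c > 0"
    and c: "\<And>x. x \<in> H0 \<Longrightarrow> - c * (norm x)\<^sup>2 \<le> B x x \<Longrightarrow> c * norm x \<le> \<bar>B x u\<bar>"
    using orth_isotropic_uniform_bound[OF assms(1-8)] by blast
  obtain K where "K > 0" and K: "\<And>x y. \<bar>B x y\<bar> \<le> K * norm x * norm y"
    using bilinear_bounded_pos[OF assms(1)] by (metis real_norm_def)
  have "norm x < sqrt (M / c)"
    if "x \<in> H0" "- M \<le> B x x" "y \<in> ball u (c / K)" "B x y = 0" for x y
  proof (rule ccontr)
    assume "\<not> norm x < sqrt (M / c)"
    then have "sqrt (M / c) \<le> norm x" by simp
    then have "M / c \<le> (norm x)\<^sup>2" and "x \<noteq> 0"
      using assms(9) \<open>c > 0\<close> by (auto dest: sqrt_le_D simp: divide_le_0_iff)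
    then have "M \<le> c * (norm x)\<^sup>2" using \<open>c > 0\<close> by (simp add: pos_divide_le_eq mult.commute)
    with that(2) have "c * norm x \<le> \<bar>B x u\<bar>" using c[OF that(1)] by simp
    then show False
      using bilinear_nonzero_in_ball[OF K assms(1) \<open>K > 0\<close> \<open>x \<noteq> 0\<close>] that(3,4) by blast
  qed
  with \<open>c > 0\<close> \<open>K > 0\<close> show ?thesis using that[of "c / K" "sqrt (M / c)"] by simp
qed

theorem corollary5p15:
  fixes q :: "'a::euclidean_space \<Rightarrow> real"
    and A H0 :: "'a set" and u :: 'a and d :: nat and M :: real
  assumes "DIM('a) = d + 1" and "d \<ge> 1"
    and "has_signature q 1 d"
    and "discrete_subset A"
    and "M > 0" and "\<forall>x\<in>A. q x \<ge> - M"
    and "subspace H0" and "H0 \<noteq> UNIV" and "A \<subseteq> H0"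
    and "u \<notin> H0" and "q u = 0"
  shows "\<exists>U. open U \<and> u \<in> U \<and> finite {x \<in> A. U \<inter> q_orth q x \<noteq> {}}"
proof -
  obtain B where B: "bilinear B" "\<And>x y. B x y = B y x" and qB: "\<And>x. q x = B x x"
    using assms(3) unfolding has_signature_def quadratic_form_def by blast
  obtain N where N: "subspace N" "dim N = d" "\<forall>v\<in>N. v \<noteq> 0 \<longrightarrow> B v v < 0"
    using assms(3) unfolding has_signature_def qB by blast
  have "dim N + 1 = DIM('a)" using N(2) assms(1) by simp
  moreover have "B u u = 0" using assms(11) qB by simp
  ultimately obtain r R where "r > 0"
    and R: "\<And>x y. x \<in> H0 \<Longrightarrow> - M \<le> B x x \<Longrightarrow> y \<in> ball u r \<Longrightarrow> B x y = 0 \<Longrightarrow> norm x < R"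
    using orth_isotropic_near_bounded[OF B N(1) _ N(3) assms(7,10) _ assms(5)] by blast
  have "{x \<in> A. ball u r \<inter> q_orth q x \<noteq> {}} \<subseteq> A \<inter> ball 0 R"
    using R assms(6,9) by (fastforce simp: qB q_orth_def polar_form_eq_bilinear[OF B qB])
  then have "finite {x \<in> A. ball u r \<inter> q_orth q x \<noteq> {}}"
    using finite_Int_bounded_if_discrete_subset[OF assms(4)] finite_subset by blast
  then show ?thesis using \<open>r > 0\<close> by (intro exI[of _ "ball u r"]) auto
qed

end
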